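(* Let $E$ be a closed formula in which all bound variables are pairwise distinct, and let $x$ be a variable bound in $E$. Let $[\Gamma]_{V(x)}$ be a normal item occurring in a derivation of $\vdash E$ in LJB. Then for every item of $\Gamma$ of the form $[\Gamma']_{V(x')}$, the variable $x'$ is in the scope of $x$.
   Context: Formulas: $A ::= P(t_1,\dots,t_n)\mid A\rightarrow A\mid\forall x\,A$, with first-order terms. A formula is a tree with nodes labelled by atomic formulas, $\rightarrow$, or $\forall x$; positions are node addresses ordered by prefix. In $E$ each bound variable $x$ labels a unique position $\forall x$; a variable $y$ is in the scope of $x$ if the position labelled $\forall x$ is a strict prefix of that labelled $\forall y$. $V(x)$ is the set of variables bound in the subformula $\forall x\,A$ of $E$ at position $\forall x$ (equivalently $x$ together with all variables in the scope of $x$). LJB: an LJB-context is a finite multiset of items; an item is a formula or $[\Gamma]_V$ ($V$ a finite set of variables bound by the bracket, $\Gamma$ an LJB-context); $FV([\Gamma]_V)=FV(\Gamma)\setminus V$. Cleaning rules (anywhere in a context): $[I,\Gamma]_V\longrightarrow I,[\Gamma]_V$ if $FV(I)\cap V=\emptyset$; $[\ ]_V\longrightarrow\emptyset$; $I\,I\longrightarrow I$; an item is normal if no cleaning rule applies inside it; $\Gamma{\downarrow}$ is the normal form for a fixed strategy. LJB rules apply only to LJB-sequents with normal context in which, in each formula, bound variables are distinct and distinct from free variables; formulas are not identified modulo $\alpha$. Rules: (L$\rightarrow$) from $\Gamma'\vdash A_1,\dots,\Gamma'\vdash A_n$ infer $\Gamma\vdash P$, where $\Gamma=\Gamma_1,[\Gamma_2,[\dots\Gamma_{i-1},[\Gamma_i,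 A_1\rightarrow\dots\rightarrow A_n\rightarrow P]_{V_{i-1}}\dots]_{V_2}]_{V_1}$ ($i\ge1$), $\Gamma'=([\dots[[\Gamma_1]_{V_1},\Gamma_2]_{V_2},\dots,\Gamma_{i-1}]_{V_{i-1}},\Gamma_i,A_1\rightarrow\dots\rightarrow A_n\rightarrow P){\downarrow}$, $P$ atomic with no free variable in $V_1\cup\dots\cup V_{i-1}$; (R$\forall$) from $[\Gamma]_V{\downarrow}\vdash A$ infer $\Gamma\vdash\forall x\,A$, $V$ the set of all variables bound in $\forall x\,A$; (R$\rightarrow$) from $(\Gamma,A){\downarrow}\vdash B$ infer $\Gamma\vdash A\rightarrow B$. *)

theory Defs
  imports Main "HOL-Library.Multiset"
begin

type_synonym var = nat

datatype trm = Var var | Fn nat "trm list"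

fun fv_trm :: "trm \<Rightarrow> var set" where
  "fv_trm (Var v) = {v}"
| "fv_trm (Fn f ts) = (\<Union>t\<in>set ts. fv_trm t)"

datatype fm = Atom nat "trm list" | Imp fm fm | All var fm

fun fv :: "fm \<Rightarrow> var set" where
  "fv (Atom p ts) = (\<Union>t\<in>set ts. fv_trm t)"
| "fv (Imp A B) = fv A \<union> fv B"
| "fv (All x A) = fv A - {x}"

fun bvlist :: "fm \<Rightarrow> var list" where
  "bvlist (Atom p ts) = []"
| "bvlist (Imp A B) = bvlist A @ bvlist B"
| "bvlist (All x A) = x # bvlist A"

definition bvars :: "fm \<Rightarrow> var set" where
  "bvars A = set (bvlist A)"

text \<open>Positions: node addresses (lists of child indices); subformula at a position.\<close>
fun sub :: "fm \<Rightarrow> nat list \<Rightarrow> fm option" where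
  "sub A [] = Some A"
| "sub (Imp A B) (i # p) = (if i = 0 then sub A p else if i = 1 then sub B p else None)"
| "sub (All x A) (i # p) = (if i = 0 then sub A p else None)"
| "sub (Atom q ts) (i # p) = None"

definition bpos :: "fm \<Rightarrow> var \<Rightarrow> nat list \<Rightarrow> bool" where
  "bpos E x p \<longleftrightarrow> (\<exists>A. sub E p = Some (All x A))"

definition in_scope :: "fm \<Rightarrow> var \<Rightarrow> var \<Rightarrow> bool" where
  "in_scope E y x \<longleftrightarrow> (\<exists>p q. bpos E x p \<and> bpos E y q \<and> (\<exists>r. r \<noteq> [] \<and> q = p @ r))"

definition Vb :: "fm \<Rightarrow> var \<Rightarrow> var set" where
  "Vb E x = {y. \<exists>p A. sub E p = Some (All x A) \<and> y \<in> bvars (All x A)}"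

datatype item = Fm fm | Br "var set" "item multiset"

type_synonym ctx = "item multiset"

inductive vfree :: "var \<Rightarrow> item \<Rightarrow> bool" where
  "v \<in> fv A \<Longrightarrow> vfree v (Fm A)"
| "I \<in># \<Gamma> \<Longrightarrow> vfree v I \<Longrightarrow> v \<notin> V \<Longrightarrow> vfree v (Br V \<Gamma>)"

definition FV :: "item \<Rightarrow> var set" where
  "FV I = {v. vfree v I}"

inductive occurs :: "item \<Rightarrow> ctx \<Rightarrow> bool" where
  "I \<in># \<Gamma> \<Longrightarrow> occurs I \<Gamma>"
| "Br V \<Delta> \<in># \<Gamma> \<Longrightarrow> occurs I \<Delta> \<Longrightarrow> occurs I \<Gamma>"

inductive clean :: "ctx \<Rightarrow> ctx \<Rightarrow> bool" where
  extrude: "FV I \<inter> V = {} \<Longrightarrow>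
     clean (add_mset (Br V (add_mset I \<Gamma>)) \<Delta>) (add_mset I (add_mset (Br V \<Gamma>) \<Delta>))"
| empty: "clean (add_mset (Br V {#}) \<Delta>) \<Delta>"
| contract: "clean (add_mset I (add_mset I \<Delta>)) (add_mset I \<Delta>)"
| inside: "clean \<Gamma> \<Gamma>' \<Longrightarrow> clean (add_mset (Br V \<Gamma>) \<Delta>) (add_mset (Br V \<Gamma>') \<Delta>)"

definition normal_ctx :: "ctx \<Rightarrow> bool" where
  "normal_ctx \<Gamma> \<longleftrightarrow> \<not> (\<exists>\<Delta>. clean \<Gamma> \<Delta>)"

definition normal_item :: "item \<Rightarrow> bool" where
  "normal_item I \<longleftrightarrow> normal_ctx {#I#}"

definition is_nf_strategy :: "(ctx \<Rightarrow> ctx) \<Rightarrow> bool" where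
  "is_nf_strategy nf \<longleftrightarrow> (\<forall>\<Gamma>. clean\<^sup>*\<^sup>* \<Gamma> (nf \<Gamma>) \<and> normal_ctx (nf \<Gamma>))"

definition wf_fm :: "fm \<Rightarrow> bool" where
  "wf_fm A \<longleftrightarrow> distinct (bvlist A) \<and> bvars A \<inter> fv A = {}"

definition wf_seq :: "ctx \<Rightarrow> fm \<Rightarrow> bool" where
  "wf_seq \<Gamma> C \<longleftrightarrow> normal_ctx \<Gamma> \<and> (\<forall>A. occurs (Fm A) \<Gamma> \<longrightarrow> wf_fm A) \<and> wf_fm C"

text \<open>\<open>plug [(\<Gamma>1,V1),...,(\<Gamma>(i-1),V(i-1))] \<Delta> = \<Gamma>1,[\<Gamma>2,[...[\<Delta>]_V(i-1)...]_V2]_V1\<close>\<close>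
fun plug :: "(ctx \<times> var set) list \<Rightarrow> ctx \<Rightarrow> ctx" where
  "plug [] \<Delta> = \<Delta>"
| "plug ((G, V) # L) \<Delta> = G + {# Br V (plug L \<Delta>) #}"

text \<open>\<open>outer [(\<Gamma>1,V1),...,(\<Gamma>(i-1),V(i-1))] {#} = [...[[\<Gamma>1]_V1,\<Gamma>2]_V2,...,\<Gamma>(i-1)]_V(i-1)\<close>\<close>
fun outer :: "(ctx \<times> var set) list \<Rightarrow> ctx \<Rightarrow> ctx" where
  "outer [] acc = acc"
| "outer ((G, V) # L) acc = outer L {# Br V (acc + G) #}"

definition imps :: "fm list \<Rightarrow> fm \<Rightarrow> fm" where
  "imps As P = foldr Imp As P"

definition rule_inst :: "(ctx \<Rightarrow> ctx) \<Rightarrow> ctx \<Rightarrow> fm \<Rightarrow> (ctx \<times> fm) list \<Rightarrow> bool" where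
  "rule_inst nf \<Gamma> C prems \<longleftrightarrow>
     \<comment> \<open>(R\<rightarrow>)\<close>
     (\<exists>A B. C = Imp A B \<and> prems = [(nf (add_mset (Fm A) \<Gamma>), B)])
   \<or> \<comment> \<open>(R\<forall>)\<close>
     (\<exists>x A. C = All x A \<and> prems = [(nf {# Br (bvars (All x A)) \<Gamma> #}, A)])
   \<or> \<comment> \<open>(L\<rightarrow>)\<close>
     (\<exists>L Gi As p ts. C = Atom p ts
        \<and> \<Gamma> = plug L (Gi + {# Fm (imps As (Atom p ts)) #})
        \<and> fv (Atom p ts) \<inter> (\<Union>(snd ` set L)) = {}
        \<and> prems = map (\<lambda>A. (nf (outer L {#} + Gi + {# Fm (imps As (Atom p ts)) #}), A)) As)"

datatype dtree = DNode ctx fm "dtree list"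

fun root :: "dtree \<Rightarrow> ctx \<times> fm" where
  "root (DNode G C ts) = (G, C)"

inductive derivation :: "(ctx \<Rightarrow> ctx) \<Rightarrow> dtree \<Rightarrow> bool" for nf where
  "wf_seq G C \<Longrightarrow> rule_inst nf G C (map root ts) \<Longrightarrow> (\<forall>t\<in>set ts. derivation nf t)
   \<Longrightarrow> derivation nf (DNode G C ts)"

inductive in_tree :: "ctx \<times> fm \<Rightarrow> dtree \<Rightarrow> bool" where
  "in_tree (G, C) (DNode G C ts)"
| "t \<in> set ts \<Longrightarrow> in_tree s t \<Longrightarrow> in_tree s (DNode G C ts)"

definition item_in_tree :: "item \<Rightarrow> dtree \<Rightarrow> bool" where
  "item_in_tree I T \<longleftrightarrow> (\<exists>G C. in_tree (G, C) T \<and> occurs I G)"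

end

theory Submission
  imports Defs "HOL-Library.Sublist"
begin

text \<open>
  Every sequent of a derivation of \<open>\<turnstile> E\<close> has a subformula of \<open>E\<close> on the right, and at any
  depth of its context only subformulas of \<open>E\<close> and brackets labelled \<open>V(z)\<close>, \<open>z\<close> bound in
  \<open>E\<close>: the rules and the cleaning steps only move, copy or discard such items.
  For normal items of this shape, induction shows that the free variables of \<open>[\<Delta>]_V(z)\<close>
  are bound strictly above \<open>\<forall>z\<close>: the free variables of a member \<open>J\<close> of \<open>\<Delta>\<close> are bound
  along one branch of \<open>E\<close>, and normality provides one of them in \<open>V(z)\<close>, i.e. bound at or
  below \<open>\<forall>z\<close>; so those outside \<open>V(z)\<close> are bound strictly above \<open>\<forall>z\<close>.
  For \<open>[\<Gamma>']_V(x')\<close> in \<open>\<Gamma>\<close>, normality of \<open>[\<Gamma>]_V(x)\<close> yields a free variable of \<open>[\<Gamma>']_V(x')\<close>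
  bound at or below \<open>\<forall>x\<close> and strictly above \<open>\<forall>x'\<close>, so \<open>x'\<close> is in the scope of \<open>x\<close>.
\<close>

lemma sub_append: "sub F (p @ q) = (case sub F p of None \<Rightarrow> None | Some G \<Rightarrow> sub G q)"
  by (induction F p rule: sub.induct) auto

lemma bvars_sub: "sub F p = Some G \<Longrightarrow> bvars G \<subseteq> bvars F"
  by (induction F p rule: sub.induct) (auto simp: bvars_def split: if_splits)

lemma bpos_Atom [simp]: "bpos (Atom n ts) v p \<longleftrightarrow> False"
  by (cases p) (auto simp: bpos_def)

lemma bpos_Imp_Nil [simp]: "bpos (Imp A B) v [] \<longleftrightarrow> False"
  by (auto simp: bpos_def)

lemma bpos_Imp_Cons [simp]: "bpos (Imp A B) v (i # p) \<longleftrightarrow> i = 0 \<and> bpos A v p \<or> i = 1 \<and> bpos B v p"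
  by (auto simp: bpos_def)

lemma bpos_All_Nil [simp]: "bpos (All x A) v [] \<longleftrightarrow> v = x"
  by (auto simp: bpos_def)

lemma bpos_All_Cons [simp]: "bpos (All x A) v (i # p) \<longleftrightarrow> i = 0 \<and> bpos A v p"
  by (auto simp: bpos_def)

lemma bpos_imp_bvars: "bpos F v p \<Longrightarrow> v \<in> bvars F"
  using bvars_sub by (fastforce simp: bpos_def bvars_def)

lemma bvars_imp_bpos: "v \<in> bvars F \<Longrightarrow> \<exists>p. bpos F v p"
proof (induction F)
  case (Imp A B)
  then obtain i :: nat and p where "i = 0 \<and> bpos A v p \<or> i = 1 \<and> bpos B v p"
    by (auto simp: bvars_def)
  then have "bpos (Imp A B) v (i # p)"
    by simp
  then show ?case ..
next
  case (All x A)
  then have "v = x \<or> (\<exists>p. bpos A v p)"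
    by (auto simp: bvars_def)
  then show ?case
    using bpos_All_Nil bpos_All_Cons by blast
qed (simp add: bvars_def)

lemma bpos_unique: "distinct (bvlist F) \<Longrightarrow> bpos F v p \<Longrightarrow> bpos F v q \<Longrightarrow> p = q"
proof (induction F arbitrary: p q)
  case (Imp A B)
  then show ?case
    by (cases p; cases q) (auto simp: bvars_def dest: bpos_imp_bvars[unfolded bvars_def])
next
  case (All x A)
  then show ?case
    by (cases p; cases q) (auto simp: bvars_def dest: bpos_imp_bvars[unfolded bvars_def])
qed simp

definition bound_above :: "fm \<Rightarrow> nat list \<Rightarrow> var set" where
  "bound_above F q = {v. \<exists>p. bpos F v p \<and> strict_prefix p q}"

lemma mem_bound_above_Cons:
  "v \<in> bound_above F (i # q) \<longleftrightarrow> bpos F v [] \<or> (\<exists>p. bpos F v (i # p) \<and> strict_prefix p q)"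
proof
  assume "v \<in> bound_above F (i # q)"
  then obtain p where "bpos F v p" and "strict_prefix p (i # q)"
    by (auto simp: bound_above_def)
  then show "bpos F v [] \<or> (\<exists>p. bpos F v (i # p) \<and> strict_prefix p q)"
    by (cases p) auto
next
  assume "bpos F v [] \<or> (\<exists>p. bpos F v (i # p) \<and> strict_prefix p q)"
  then show "v \<in> bound_above F (i # q)"
    unfolding bound_above_def by force
qed

lemma bound_above_Imp_0 [simp]: "bound_above (Imp A B) (0 # q) = bound_above A q"
  by (auto simp: mem_bound_above_Cons) (auto simp: bound_above_def)

lemma bound_above_Imp_1 [simp]: "bound_above (Imp A B) (Suc 0 # q) = bound_above B q"
  by (auto simp: mem_bound_above_Cons) (auto simp: bound_above_def)

lemma bound_above_All_0 [simp]: "bound_above (All x A) (0 # q) = insert x (bound_above A q)"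
  by (auto simp: mem_bound_above_Cons) (auto simp: bound_above_def)

lemma fv_sub_subset: "sub F q = Some H \<Longrightarrow> fv H \<subseteq> fv F \<union> bound_above F q"
  by (induction F q arbitrary: H rule: sub.induct) (auto split: if_splits)

lemma mem_Vb_iff:
  assumes "distinct (bvlist E)" and "bpos E z p"
  shows "y \<in> Vb E z \<longleftrightarrow> (\<exists>q. bpos E y q \<and> prefix p q)"
proof
  assume "y \<in> Vb E z"
  then obtain p' A where p': "sub E p' = Some (All z A)" and y: "y \<in> bvars (All z A)"
    by (auto simp: Vb_def)
  have "p' = p"
    using p' assms by (auto simp: bpos_def intro: bpos_unique)
  obtain r where "bpos (All z A) y r"
    using bvars_imp_bpos[OF y] ..
  then have "bpos E y (p @ r)"
    using p' \<open>p' = p\<close> by (auto simp: bpos_def sub_append)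
  moreover have "prefix p (p @ r)"
    by simp
  ultimately show "\<exists>q. bpos E y q \<and> prefix p q"
    by blast
next
  assume "\<exists>q. bpos E y q \<and> prefix p q"
  then obtain r B where "sub E (p @ r) = Some (All y B)"
    by (auto simp: bpos_def prefix_def)
  moreover obtain A where A: "sub E p = Some (All z A)"
    using assms(2) by (auto simp: bpos_def)
  ultimately have "sub (All z A) r = Some (All y B)"
    by (simp add: sub_append)
  then have "y \<in> bvars (All z A)"
    using bvars_sub by (fastforce simp: bvars_def)
  then show "y \<in> Vb E z"
    using A by (auto simp: Vb_def)
qed

lemma Vb_sub:
  assumes "distinct (bvlist E)" and "sub E p = Some (All z A)"
  shows "Vb E z = bvars (All z A)"
proof (intro set_eqI iffI)
  fix y
  assume "y \<in> Vb E z"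
  then obtain p' A' where p': "sub E p' = Some (All z A')" and y: "y \<in> bvars (All z A')"
    by (auto simp: Vb_def)
  have "bpos E z p" and "bpos E z p'"
    using assms(2) p' by (simp_all add: bpos_def)
  then have "p' = p"
    using bpos_unique[OF assms(1)] by blast
  with assms(2) p' y show "y \<in> bvars (All z A)"
    by simp
next
  fix y
  assume "y \<in> bvars (All z A)"
  with assms(2) show "y \<in> Vb E z"
    by (auto simp: Vb_def)
qed

lemma strict_prefix_if_Vb_bound_above:
  assumes "distinct (bvlist E)" and "bpos E z p"
    and "w \<in> Vb E z" and "w \<in> bound_above E q"
  shows "strict_prefix p q"
proof -
  obtain pw where pw: "bpos E w pw" and "prefix p pw"
    using assms mem_Vb_iff by blast
  obtain pw' where pw': "bpos E w pw'" and "strict_prefix pw' q"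
    using assms(4) by (auto simp: bound_above_def)
  have "pw = pw'"
    using bpos_unique[OF assms(1) pw pw'] .
  with \<open>prefix p pw\<close> \<open>strict_prefix pw' q\<close> show ?thesis
    using prefix_order.le_less_trans by blast
qed

lemma occurs_add_mset_iff:
  "occurs I (add_mset J \<Gamma>) \<longleftrightarrow> I = J \<or> (\<exists>V \<Delta>. J = Br V \<Delta> \<and> occurs I \<Delta>) \<or> occurs I \<Gamma>"
proof
  assume "occurs I (add_mset J \<Gamma>)"
  then show "I = J \<or> (\<exists>V \<Delta>. J = Br V \<Delta> \<and> occurs I \<Delta>) \<or> occurs I \<Gamma>"
    by cases (auto intro: occurs.intros)
next
  have "occurs I \<Gamma> \<Longrightarrow> occurs I (add_mset J \<Gamma>)"
    by (induction rule: occurs.induct) (auto intro: occurs.intros)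
  then show "I = J \<or> (\<exists>V \<Delta>. J = Br V \<Delta> \<and> occurs I \<Delta>) \<or> occurs I \<Gamma> \<Longrightarrow> occurs I (add_mset J \<Gamma>)"
    by (auto intro: occurs.intros)
qed

lemma occurs_empty [simp]: "\<not> occurs I {#}"
  by (auto elim: occurs.cases)

lemma occurs_union [simp]: "occurs I (\<Gamma> + \<Delta>) \<longleftrightarrow> occurs I \<Gamma> \<or> occurs I \<Delta>"
  by (induction \<Gamma>) (auto simp: occurs_add_mset_iff)

fun label :: "item \<Rightarrow> fm + var set" where
  "label (Fm A) = Inl A"
| "label (Br V \<Gamma>) = Inr V"

definition labels :: "ctx \<Rightarrow> (fm + var set) set" where
  "labels \<Gamma> = label ` {I. occurs I \<Gamma>}"

lemma labels_empty [simp]: "labels {#} = {}"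
  by (simp add: labels_def)

lemma labels_add_Fm [simp]: "labels (add_mset (Fm A) \<Gamma>) = insert (Inl A) (labels \<Gamma>)"
  by (force simp: labels_def occurs_add_mset_iff)

lemma labels_add_Br [simp]: "labels (add_mset (Br V \<Delta>) \<Gamma>) = insert (Inr V) (labels \<Delta> \<union> labels \<Gamma>)"
  by (force simp: labels_def occurs_add_mset_iff)

lemma labels_union [simp]: "labels (\<Gamma> + \<Delta>) = labels \<Gamma> \<union> labels \<Delta>"
  by (auto simp: labels_def)

lemma occurs_trans: "occurs I \<Gamma> \<Longrightarrow> occurs J {#I#} \<Longrightarrow> occurs J \<Gamma>"
  by (induction rule: occurs.induct) (auto simp: occurs_add_mset_iff intro: occurs.intros)

lemma labels_occurs: "occurs I \<Gamma> \<Longrightarrow> labels {#I#} \<subseteq> labels \<Gamma>"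
  by (auto simp: labels_def dest: occurs_trans)

lemma labels_member: "J \<in># \<Delta> \<Longrightarrow> labels {#J#} \<subseteq> labels {#Br V \<Delta>#}"
  by (rule labels_occurs) (auto intro: occurs.intros)

lemma labels_clean: "clean \<Gamma> \<Gamma>' \<Longrightarrow> labels \<Gamma>' \<subseteq> labels \<Gamma>"
proof (induction rule: clean.induct)
  case (extrude I V \<Gamma> \<Delta>)
  then show ?case by (cases I) auto
next
  case (contract I \<Delta>)
  then show ?case by (cases I) auto
qed auto

lemma labels_nf:
  assumes "is_nf_strategy nf"
  shows "labels (nf \<Gamma>) \<subseteq> labels \<Gamma>"
proof -
  have "labels \<Gamma>' \<subseteq> labels \<Gamma>" if "clean\<^sup>*\<^sup>* \<Gamma> \<Gamma>'" for \<Gamma>'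
    using that by (induction rule: rtranclp_induct) (use labels_clean in blast)+
  then show ?thesis
    using assms by (simp add: is_nf_strategy_def)
qed

lemma labels_plug: "labels X \<subseteq> labels (plug L X)"
  by (induction L X rule: plug.induct) auto

lemma labels_outer: "labels (outer L acc) \<subseteq> labels acc \<union> labels (plug L X)"
  by (induction L acc rule: outer.induct) fastforce+

definition subformulas :: "fm \<Rightarrow> fm set" where
  "subformulas E = {A. \<exists>p. sub E p = Some A}"

lemma subformulas_trans:
  assumes "F \<in> subformulas E" and "G \<in> subformulas F"
  shows "G \<in> subformulas E"
proof -
  obtain p q where "sub E p = Some F" and "sub F q = Some G"
    using assms by (auto simp: subformulas_def)
  then have "sub E (p @ q) = Some G"
    by (simp add: sub_append)
  then show ?thesis
    by (auto simp: subformulas_def)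
qed

lemma immediate_subformulas:
  "A \<in> subformulas (Imp A B)" "B \<in> subformulas (Imp A B)" "A \<in> subformulas (All x A)"
proof -
  have "sub (Imp A B) [0] = Some A" "sub (Imp A B) [1] = Some B" "sub (All x A) [0] = Some A"
    by simp_all
  then show "A \<in> subformulas (Imp A B)" "B \<in> subformulas (Imp A B)" "A \<in> subformulas (All x A)"
    unfolding subformulas_def by blast+
qed

lemma subformulas_imps: "imps As P \<in> subformulas E \<Longrightarrow> set As \<subseteq> subformulas E"
  by (induction As) (auto simp: imps_def intro: subformulas_trans immediate_subformulas)

definition admissible_labels :: "fm \<Rightarrow> (fm + var set) set" where
  "admissible_labels E = Inl ` subformulas E \<union> Inr ` Vb E ` bvars E"

fun admissible_seq :: "fm \<Rightarrow> ctx \<times> fm \<Rightarrow> bool" where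
  "admissible_seq E (\<Gamma>, C) \<longleftrightarrow> C \<in> subformulas E \<and> labels \<Gamma> \<subseteq> admissible_labels E"

lemma rule_inst_admissible:
  assumes "distinct (bvlist E)" and nf: "is_nf_strategy nf"
    and "rule_inst nf \<Gamma> C prems" and "admissible_seq E (\<Gamma>, C)" and "s \<in> set prems"
  shows "admissible_seq E s"
  using assms(3) unfolding rule_inst_def
proof (elim disjE exE conjE)
  fix A B
  assume C: "C = Imp A B" and prems: "prems = [(nf (add_mset (Fm A) \<Gamma>), B)]"
  have "Imp A B \<in> subformulas E"
    using assms(4) C by simp
  then have "A \<in> subformulas E" and "B \<in> subformulas E"
    using subformulas_trans immediate_subformulas by blast+
  moreover have "labels (nf (add_mset (Fm A) \<Gamma>)) \<subseteq> insert (Inl A) (labels \<Gamma>)"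
    using labels_nf[OF nf, of "add_mset (Fm A) \<Gamma>"] by simp
  ultimately show ?thesis
    using assms(4,5) prems by (auto simp: admissible_labels_def)
next
  fix x A
  assume C: "C = All x A" and prems: "prems = [(nf {# Br (bvars (All x A)) \<Gamma> #}, A)]"
  have "All x A \<in> subformulas E"
    using assms(4) C by simp
  then obtain p where p: "sub E p = Some (All x A)"
    by (auto simp: subformulas_def)
  then have "bpos E x p"
    by (simp add: bpos_def)
  then have "x \<in> bvars E"
    by (rule bpos_imp_bvars)
  moreover have "Vb E x = bvars (All x A)"
    using Vb_sub[OF assms(1) p] .
  ultimately have "Inr (bvars (All x A)) \<in> admissible_labels E"
    unfolding admissible_labels_def by blast
  moreover have "A \<in> subformulas E"
    using \<open>All x A \<in> subformulas E\<close> subformulas_trans immediate_subformulas by blast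
  moreover have "labels (nf {# Br (bvars (All x A)) \<Gamma> #}) \<subseteq> insert (Inr (bvars (All x A))) (labels \<Gamma>)"
    using labels_nf[OF nf, of "{# Br (bvars (All x A)) \<Gamma> #}"] by simp
  ultimately show ?thesis
    using assms(4,5) prems by auto
next
  fix L \<Gamma>\<^sub>i As p ts
  let ?B = "Fm (imps As (Atom p ts))"
  assume \<Gamma>: "\<Gamma> = plug L (\<Gamma>\<^sub>i + {#?B#})"
    and prems: "prems = map (\<lambda>A. (nf (outer L {#} + \<Gamma>\<^sub>i + {#?B#}), A)) As"
  have "labels (\<Gamma>\<^sub>i + {#?B#}) \<subseteq> labels \<Gamma>"
    unfolding \<Gamma> by (rule labels_plug)
  then have "labels (outer L {#} + \<Gamma>\<^sub>i + {#?B#}) \<subseteq> labels \<Gamma>"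
    using labels_outer[of L "{#}" "\<Gamma>\<^sub>i + {#?B#}"] unfolding \<Gamma> by auto
  then have "labels (nf (outer L {#} + \<Gamma>\<^sub>i + {#?B#})) \<subseteq> admissible_labels E"
    using assms(4) labels_nf[OF nf] by fastforce
  moreover have "imps As (Atom p ts) \<in> subformulas E"
    using assms(4) \<open>labels (\<Gamma>\<^sub>i + {#?B#}) \<subseteq> labels \<Gamma>\<close> by (auto simp: admissible_labels_def)
  then have "set As \<subseteq> subformulas E"
    by (rule subformulas_imps)
  ultimately show ?thesis
    using assms(5) prems by auto
qed

lemma derivation_admissible:
  assumes "derivation nf T" and "is_nf_strategy nf" and "distinct (bvlist E)"
    and "admissible_seq E (root T)" and "in_tree (\<Gamma>', C') T"
  shows "admissible_seq E (\<Gamma>', C')"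
  using assms(1,4,5)
proof (induction arbitrary: \<Gamma>' C' rule: derivation.induct)
  case (1 \<Gamma> C ts)
  have "admissible_seq E (root t)" if "t \<in> set ts" for t
    using rule_inst_admissible[OF assms(3,2) 1(2)] "1.prems"(1) that by simp
  with "1.prems"(2) 1(3) show ?case
    by (cases rule: in_tree.cases) (use "1.prems"(1) in \<open>auto simp del: admissible_seq.simps\<close>)
qed

lemma item_in_tree_admissible:
  assumes "derivation nf T" and "is_nf_strategy nf" and "distinct (bvlist E)"
    and "root T = ({#}, E)" and "item_in_tree I T"
  shows "labels {#I#} \<subseteq> admissible_labels E"
proof -
  have "E \<in> subformulas E"
    using sub.simps(1) unfolding subformulas_def by blast
  then have "admissible_seq E (root T)"
    using assms(4) by simp
  moreover obtain G C where "in_tree (G, C) T" and "occurs I G"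
    using assms(5) by (auto simp: item_in_tree_def)
  ultimately show ?thesis
    using derivation_admissible[OF assms(1-3)] labels_occurs by fastforce
qed

lemma clean_union: "clean \<Gamma> \<Gamma>' \<Longrightarrow> clean (\<Gamma> + \<Delta>) (\<Gamma>' + \<Delta>)"
  by (induction rule: clean.induct) (auto intro: clean.intros)

lemma normal_item_Br_member:
  assumes "normal_item (Br V \<Delta>)" and "J \<in># \<Delta>"
  shows "normal_item J"
  unfolding normal_item_def normal_ctx_def
proof
  assume "\<exists>\<Delta>'. clean {#J#} \<Delta>'"
  then obtain \<Delta>' where "clean {#J#} \<Delta>'" ..
  moreover obtain \<Delta>\<^sub>0 where \<Delta>: "\<Delta> = add_mset J \<Delta>\<^sub>0"
    using assms(2) by (metis mset_add)
  ultimately have "clean \<Delta> (\<Delta>' + \<Delta>\<^sub>0)"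
    using clean_union[of "{#J#}" \<Delta>' \<Delta>\<^sub>0] by simp
  then have "clean {#Br V \<Delta>#} {#Br V (\<Delta>' + \<Delta>\<^sub>0)#}"
    using clean.inside by fastforce
  with assms(1) show False
    by (auto simp: normal_item_def normal_ctx_def)
qed

lemma normal_item_Br_FV_inter:
  assumes "normal_item (Br V \<Delta>)" and "J \<in># \<Delta>"
  shows "FV J \<inter> V \<noteq> {}"
proof
  assume "FV J \<inter> V = {}"
  then have "clean {#Br V (add_mset J (\<Delta> - {#J#}))#} {#J, Br V (\<Delta> - {#J#})#}"
    using clean.extrude by fastforce
  with assms show False
    by (simp add: normal_item_def normal_ctx_def)
qed

lemma FV_Fm [simp]: "FV (Fm A) = fv A"
  by (auto simp: FV_def elim: vfree.cases intro: vfree.intros)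

lemma FV_Br: "FV (Br V \<Delta>) = (\<Union>J \<in> set_mset \<Delta>. FV J) - V"
  by (auto simp: FV_def elim: vfree.cases intro: vfree.intros)

lemma FV_normal_bracket_bound_above:
  assumes E: "distinct (bvlist E)" and z: "bpos E z p" and normal: "normal_item (Br (Vb E z) \<Delta>)"
    and members: "\<And>J. J \<in># \<Delta> \<Longrightarrow> \<exists>q. FV J \<subseteq> bound_above E q"
  shows "FV (Br (Vb E z) \<Delta>) \<subseteq> bound_above E p"
proof
  fix v
  assume "v \<in> FV (Br (Vb E z) \<Delta>)"
  then obtain J where J: "J \<in># \<Delta>" and "v \<in> FV J" and v_outside: "v \<notin> Vb E z"
    by (auto simp: FV_Br)
  obtain q where q: "FV J \<subseteq> bound_above E q"
    using members[OF J] ..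
  obtain w where "w \<in> FV J" and "w \<in> Vb E z"
    using normal_item_Br_FV_inter[OF normal J] by blast
  then have "strict_prefix p q"
    using strict_prefix_if_Vb_bound_above[OF E z] q by blast
  obtain pv where pv: "bpos E v pv" and "strict_prefix pv q"
    using \<open>v \<in> FV J\<close> q by (auto simp: bound_above_def)
  have "\<not> prefix p pv"
    using v_outside pv mem_Vb_iff[OF E z] by blast
  moreover have "prefix p pv \<or> prefix pv p"
    using prefix_same_cases \<open>strict_prefix p q\<close> \<open>strict_prefix pv q\<close>
    by (auto simp: strict_prefix_def)
  ultimately have "strict_prefix pv p"
    by (auto simp: strict_prefix_def)
  with pv show "v \<in> bound_above E p"
    by (auto simp: bound_above_def)
qed

lemma FV_normal_item_bound_above:
  assumes "fv E = {}" and E: "distinct (bvlist E)"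
  shows "normal_item I \<Longrightarrow> labels {#I#} \<subseteq> admissible_labels E \<Longrightarrow> \<exists>q. FV I \<subseteq> bound_above E q"
proof (induction I)
  case (Fm A)
  then obtain q where "sub E q = Some A"
    by (auto simp: admissible_labels_def subformulas_def)
  then show ?case
    using fv_sub_subset assms(1) by fastforce
next
  case (Br V \<Delta>)
  then obtain z where "z \<in> bvars E" and V: "V = Vb E z"
    by (auto simp: admissible_labels_def)
  then obtain p where "bpos E z p"
    using bvars_imp_bpos by blast
  moreover have "\<exists>q. FV J \<subseteq> bound_above E q" if J: "J \<in># \<Delta>" for J
  proof -
    have "normal_item J"
      using normal_item_Br_member Br.prems(1) J by blast
    moreover have "labels {#J#} \<subseteq> admissible_labels E"
      using Br.prems(2) labels_member[OF J] by blast
    ultimately show ?thesis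
      using Br.IH J by blast
  qed
  ultimately show ?case
    using FV_normal_bracket_bound_above[OF E] Br.prems(1) V by blast
qed

theorem proposition12:
  fixes E :: fm and x :: var and nf :: "ctx \<Rightarrow> ctx" and T :: dtree and \<Gamma> :: ctx
  assumes "fv E = {}"
    and "distinct (bvlist E)"
    and "x \<in> bvars E"
    and "is_nf_strategy nf"
    and "derivation nf T"
    and "root T = ({#}, E)"
    and "item_in_tree (Br (Vb E x) \<Gamma>) T"
    and "normal_item (Br (Vb E x) \<Gamma>)"
  shows "\<forall>x' \<Gamma>'. x' \<in> bvars E \<and> Br (Vb E x') \<Gamma>' \<in># \<Gamma> \<longrightarrow> in_scope E x' x"
proof (intro allI impI, elim conjE)
  fix x' \<Gamma>'
  assume "x' \<in> bvars E" and J: "Br (Vb E x') \<Gamma>' \<in># \<Gamma>"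
  obtain p p' where p: "bpos E x p" and p': "bpos E x' p'"
    using assms(3) \<open>x' \<in> bvars E\<close> bvars_imp_bpos by blast
  have "labels {#Br (Vb E x) \<Gamma>#} \<subseteq> admissible_labels E"
    using item_in_tree_admissible[OF assms(5,4,2,6,7)] .
  then have admissible_J: "labels {#Br (Vb E x') \<Gamma>'#} \<subseteq> admissible_labels E"
    using labels_member[OF J] by blast
  have normal_J: "normal_item (Br (Vb E x') \<Gamma>')"
    using normal_item_Br_member[OF assms(8) J] .
  have "\<exists>q. FV K \<subseteq> bound_above E q" if K: "K \<in># \<Gamma>'" for K
    using FV_normal_item_bound_above[OF assms(1,2) normal_item_Br_member[OF normal_J K]]
      admissible_J labels_member[OF K] by blast
  then have "FV (Br (Vb E x') \<Gamma>') \<subseteq> bound_above E p'"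
    using FV_normal_bracket_bound_above[OF assms(2) p' normal_J] by blast
  moreover obtain w where "w \<in> FV (Br (Vb E x') \<Gamma>')" and "w \<in> Vb E x"
    using normal_item_Br_FV_inter[OF assms(8) J] by blast
  ultimately have "strict_prefix p p'"
    using strict_prefix_if_Vb_bound_above[OF assms(2) p] by blast
  with p p' show "in_scope E x' x"
    by (auto simp: in_scope_def strict_prefix_def prefix_def)
qed

end
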